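(* There is a constant $\hat C=\hat C(\alpha,\beta)$ such that for every $0\le h\in L^1(\mathbb R^d)$ and $t>0$, $$t^{-1}\int_0^t\|\psi_\tau h\|_1\,d\tau\le\hat C\,\|\psi_th\|_1.$$
   Context: Let $d\ge3$, $1<\alpha<2$, $\kappa>0$. Let $\gamma(a)=\frac{2^a\pi^{d/2}\Gamma(a/2)}{\Gamma(\frac d2-\frac a2)}$ and let $\beta\in]0,\alpha[$ be defined by $\beta\frac{d+\beta-2}{d+\beta-\alpha}\frac{\gamma(d+\beta-2)}{\gamma(d+\beta-\alpha)}=\kappa$. Let $\eta(u)=u^\beta$ for $0<u<1$, $\eta(u)=\beta u(2-\frac u2)+1-\frac32\beta$ for $1\le u\le2$, $\eta(u)=1+\frac\beta2$ for $u\ge2$, and $\psi_s(x)=\eta(s^{-1/\alpha}|x|)$ for $s>0$. *)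

theory Defs
  imports "HOL-Analysis.Analysis"
begin

definition gamma_const :: "nat \<Rightarrow> real \<Rightarrow> real" where
  "gamma_const d a = 2 powr a * pi powr (real d / 2) * Gamma (a / 2) / Gamma (real d / 2 - a / 2)"

definition eta :: "real \<Rightarrow> real \<Rightarrow> real" where
  "eta \<beta> u = (if u < 1 then u powr \<beta>
               else if u \<le> 2 then \<beta> * u * (2 - u / 2) + 1 - 3 / 2 * \<beta>
               else 1 + \<beta> / 2)"

definition psi :: "real \<Rightarrow> real \<Rightarrow> real \<Rightarrow> 'a::real_normed_vector \<Rightarrow> real" where
  "psi \<alpha> \<beta> s x = eta \<beta> (s powr (-1 / \<alpha>) * norm x)"

definition L1norm :: "('a::euclidean_space \<Rightarrow> real) \<Rightarrow> real" where
  "L1norm f = (\<integral>x. \<bar>f x\<bar> \<partial>lborel)"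

end

theory Submission
  imports Defs
begin

(* For \<tau> \<le> t the weight \<psi>_\<tau> is dominated pointwise by (1 + \<beta>/2) (t/\<tau>)^(\<beta>/\<alpha>) \<psi>_t, because \<eta> grows at
   most like u^\<beta>: enlarging its argument by a factor l \<ge> 1 costs at most a factor (1 + \<beta>/2) l^\<beta>.
   Since \<beta> < \<alpha>, the factor (t/\<tau>)^(\<beta>/\<alpha>) has mean 1/(1 - \<beta>/\<alpha>) over \<tau> \<in> (0, t), which gives
   C = (1 + \<beta>/2) / (1 - \<beta>/\<alpha>). *)

lemma interval_integral_powr:
  fixes p t :: real
  assumes p: "-1 < p" and t: "0 < t"
  shows "set_integrable lborel (einterval 0 t) (\<lambda>x. x powr p)"
    and "(LBINT x=0..t. x powr p) = t powr (p + 1) / (p + 1)"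
proof -
  define F where "F x = x powr (p + 1) / (p + 1)" for x
  have deriv: "DERIV F x :> x powr p" if "0 < x" for x
  proof -
    have "DERIV F x :> (p + 1) * x powr (p + 1 - 1) / (p + 1)"
      unfolding F_def using that by (intro DERIV_cdivide has_real_derivative_powr) auto
    then show ?thesis using p by simp
  qed
  have cont: "isCont (\<lambda>x. x powr p) x" if "0 < x" for x
    using that by (auto intro!: continuous_intros)
  have lim0: "(F \<longlongrightarrow> 0) (at_right 0)"
    using p unfolding F_def
    by (intro tendsto_divide_zero tendsto_zero_powrI[where b="p + 1"])
       (auto intro!: tendsto_intros eventually_at_rightI[of 0 1])
  have limt: "(F \<longlongrightarrow> F t) (at_left t)"
    using t p unfolding F_def by (intro tendsto_intros) auto
  have "set_integrable lborel (einterval (ereal 0) t) (\<lambda>x. x powr p)"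
    and "(LBINT x=ereal 0..t. x powr p) = F t - 0"
    by (rule interval_integral_FTC_nonneg[where F=F];
        use t deriv cont lim0 limt in \<open>auto simp: zero_ereal_def ereal_tendsto_simps1\<close>)+
  then show "set_integrable lborel (einterval 0 t) (\<lambda>x. x powr p)"
    and "(LBINT x=0..t. x powr p) = t powr (p + 1) / (p + 1)"
    by (simp_all add: F_def zero_ereal_def)
qed

lemma interval_integral_le_powr_bound:
  fixes F :: "real \<Rightarrow> real" and p t K :: real
  assumes p: "-1 < p" and t: "0 < t" and K: "0 \<le> K"
    and F: "\<And>s. 0 < s \<Longrightarrow> s < t \<Longrightarrow> F s \<le> K * s powr p"
  shows "(LBINT s=0..t. F s) \<le> K * (t powr (p + 1) / (p + 1))"
proof -
  let ?I = "einterval 0 (ereal t)"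
  have mem: "s \<in> ?I \<longleftrightarrow> 0 < s \<and> s < t" for s
    by (simp add: einterval_iff zero_ereal_def)
  have "(LBINT s=0..t. F s) = (\<integral>s. indicator ?I s *\<^sub>R F s \<partial>lborel)"
    using t by (simp add: interval_lebesgue_integral_le_eq set_lebesgue_integral_def zero_ereal_def)
  also have "\<dots> \<le> (\<integral>s. indicator ?I s *\<^sub>R (K * s powr p) \<partial>lborel)"
  proof (rule integral_mono')
    show "integrable lborel (\<lambda>s. indicator ?I s *\<^sub>R (K * s powr p))"
      using set_integrable_mult_right[OF interval_integral_powr(1)[OF p t], of K]
      unfolding set_integrable_def .
  qed (use F K in \<open>auto simp: mem indicator_def\<close>)
  also have "\<dots> = K * (LBINT s=0..t. s powr p)"
    using t by (simp add: interval_lebesgue_integral_le_eq set_lebesgue_integral_def zero_ereal_def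
        flip: integral_mult_right_zero) (simp add: mult_ac)
  finally show ?thesis
    using interval_integral_powr(2)[OF p t] by simp
qed

lemma L1norm_le_scaled:
  fixes f g :: "'a::euclidean_space \<Rightarrow> real"
  assumes g: "integrable lborel g" and le: "\<And>x. \<bar>f x\<bar> \<le> c * \<bar>g x\<bar>"
  shows "L1norm f \<le> c * L1norm g"
proof -
  have "(\<integral>x. \<bar>f x\<bar> \<partial>lborel) \<le> (\<integral>x. c * \<bar>g x\<bar> \<partial>lborel)"
    using le by (intro integral_mono' integrable_mult_right integrable_abs g)
      (auto intro: order_trans[OF abs_ge_zero])
  then show ?thesis
    unfolding L1norm_def by simp
qed

lemma eta_middle: "1 \<le> u \<Longrightarrow> u \<le> 2 \<Longrightarrow> eta b u = 1 + b / 2 - b / 2 * (u - 2)\<^sup>2"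
  by (simp add: eta_def power2_eq_square algebra_simps)

lemma eta_le:
  assumes "0 \<le> b" "0 \<le> u"
  shows "eta b u \<le> 1 + b / 2"
proof -
  consider "u < 1" | "1 \<le> u" "u \<le> 2" | "2 < u"
    by linarith
  then show ?thesis
  proof cases
    case 1
    then have "u powr b \<le> 1"
      using assms by (simp add: powr_le1)
    with 1 assms show ?thesis by (simp add: eta_def)
  next
    case 2
    then show ?thesis using assms by (simp add: eta_middle)
  next
    case 3
    then show ?thesis by (simp add: eta_def)
  qed
qed

lemma one_le_eta:
  assumes "0 \<le> b" "1 \<le> u"
  shows "1 \<le> eta b u"
proof (cases "u \<le> 2")
  case True
  then have "(u - 2)\<^sup>2 \<le> 1"
    using assms by (simp add: abs_square_le_1)
  then have "b / 2 * (u - 2)\<^sup>2 \<le> b / 2"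
    using assms mult_left_mono[of _ 1 "b / 2"] by simp
  with True assms show ?thesis by (simp add: eta_middle)
next
  case False
  then show ?thesis using assms by (simp add: eta_def)
qed

lemma eta_nonneg: "0 \<le> b \<Longrightarrow> 0 \<le> u \<Longrightarrow> 0 \<le> eta b u"
  by (cases "u < 1") (auto simp: eta_def dest: one_le_eta[of b u])

lemma eta_le_powr:
  assumes "0 \<le> b" "0 \<le> u"
  shows "eta b u \<le> (1 + b / 2) * u powr b"
proof (cases "u < 1")
  case True
  have "1 * u powr b \<le> (1 + b / 2) * u powr b"
    using assms by (intro mult_right_mono) auto
  with True show ?thesis by (simp add: eta_def)
next
  case False
  then have "1 + b / 2 \<le> (1 + b / 2) * u powr b"
    using assms by (simp add: ge_one_powr_ge_zero)
  with eta_le[OF assms] show ?thesis by linarith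
qed

lemma eta_mult_le:
  assumes b: "0 \<le> b" and u: "0 \<le> u" and l: "1 \<le> l"
  shows "eta b (l * u) \<le> (1 + b / 2) * l powr b * eta b u"
proof (cases "u < 1")
  case True
  then have "eta b u = u powr b"
    by (simp add: eta_def)
  with eta_le_powr[of b "l * u"] show ?thesis
    using b u l by (simp add: powr_mult mult_ac)
next
  case False
  have "1 \<le> l powr b * eta b u"
    using False b l by (intro mult_ge1_I ge_one_powr_ge_zero one_le_eta) auto
  have "eta b (l * u) \<le> 1 + b / 2"
    using b u l by (intro eta_le) auto
  also have "\<dots> \<le> (1 + b / 2) * (l powr b * eta b u)"
    using b \<open>1 \<le> l powr b * eta b u\<close> by simp
  finally show ?thesis by (simp add: mult.assoc)
qed

lemma eta_measurable [measurable]: "eta b \<in> borel_measurable borel"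
  unfolding eta_def by measurable

lemma psi_nonneg: "0 \<le> \<beta> \<Longrightarrow> 0 \<le> psi \<alpha> \<beta> s x"
  unfolding psi_def by (simp add: eta_nonneg)

lemma psi_le: "0 \<le> \<beta> \<Longrightarrow> psi \<alpha> \<beta> s x \<le> 1 + \<beta> / 2"
  unfolding psi_def by (simp add: eta_le)

lemma psi_le_scaled:
  assumes "0 < \<alpha>" "0 \<le> \<beta>" "0 < \<tau>" "\<tau> \<le> t"
  shows "psi \<alpha> \<beta> \<tau> x \<le> (1 + \<beta> / 2) * (t / \<tau>) powr (\<beta> / \<alpha>) * psi \<alpha> \<beta> t x"
proof -
  define l where "l = (t / \<tau>) powr (1 / \<alpha>)"
  have "1 \<le> l"
    using assms by (simp add: l_def ge_one_powr_ge_zero)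
  have "\<tau> powr (-1 / \<alpha>) * norm x = l * (t powr (-1 / \<alpha>) * norm x)"
    using assms by (simp add: l_def powr_divide powr_minus_divide field_simps)
  then have "psi \<alpha> \<beta> \<tau> x = eta \<beta> (l * (t powr (-1 / \<alpha>) * norm x))"
    unfolding psi_def by (rule arg_cong)
  also have "\<dots> \<le> (1 + \<beta> / 2) * l powr \<beta> * psi \<alpha> \<beta> t x"
    unfolding psi_def using assms \<open>1 \<le> l\<close> by (intro eta_mult_le) auto
  also have "l powr \<beta> = (t / \<tau>) powr (\<beta> / \<alpha>)"
    by (simp add: l_def powr_powr)
  finally show ?thesis .
qed

lemma integrable_psi_mult:
  fixes h :: "'a::euclidean_space \<Rightarrow> real"
  assumes "0 \<le> \<beta>" and h: "integrable lborel h"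
  shows "integrable lborel (\<lambda>x. psi \<alpha> \<beta> s x * h x)"
proof (rule Bochner_Integration.integrable_bound)
  show "integrable lborel (\<lambda>x. (1 + \<beta> / 2) * h x)"
    using h by (rule integrable_mult_right)
  show "(\<lambda>x. psi \<alpha> \<beta> s x * h x) \<in> borel_measurable lborel"
    using borel_measurable_integrable[OF h] unfolding psi_def by measurable
  show "AE x in lborel. norm (psi \<alpha> \<beta> s x * h x) \<le> norm ((1 + \<beta> / 2) * h x)"
  proof (rule AE_I2)
    fix x :: 'a
    have "\<bar>psi \<alpha> \<beta> s x\<bar> \<le> 1 + \<beta> / 2"
      using psi_le[OF \<open>0 \<le> \<beta>\<close>] by (simp add: abs_of_nonneg[OF psi_nonneg[OF \<open>0 \<le> \<beta>\<close>]])
    then show "norm (psi \<alpha> \<beta> s x * h x) \<le> norm ((1 + \<beta> / 2) * h x)"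
      using \<open>0 \<le> \<beta>\<close> by (simp add: abs_mult mult_right_mono)
  qed
qed

lemma L1norm_psi_mult_le:
  fixes h :: "'a::euclidean_space \<Rightarrow> real"
  assumes "0 < \<alpha>" "0 \<le> \<beta>" "0 < \<tau>" "\<tau> \<le> t" and h: "integrable lborel h"
  shows "L1norm (\<lambda>x. psi \<alpha> \<beta> \<tau> x * h x)
           \<le> (1 + \<beta> / 2) * (t / \<tau>) powr (\<beta> / \<alpha>) * L1norm (\<lambda>x. psi \<alpha> \<beta> t x * h x)"
proof (rule L1norm_le_scaled[OF integrable_psi_mult[OF \<open>0 \<le> \<beta>\<close> h]])
  fix x
  show "\<bar>psi \<alpha> \<beta> \<tau> x * h x\<bar> \<le> (1 + \<beta> / 2) * (t / \<tau>) powr (\<beta> / \<alpha>) * \<bar>psi \<alpha> \<beta> t x * h x\<bar>"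
    using mult_right_mono[OF psi_le_scaled[OF assms(1-4), of x], of "\<bar>h x\<bar>"]
    by (simp add: abs_mult abs_of_nonneg[OF psi_nonneg[OF \<open>0 \<le> \<beta>\<close>]] mult.assoc)
qed

lemma average_L1norm_psi_mult_le:
  fixes h :: "'a::euclidean_space \<Rightarrow> real"
  assumes "0 \<le> \<beta>" "\<beta> < \<alpha>" and h: "integrable lborel h" and t: "0 < t"
  shows "(1 / t) * (LBINT \<tau>=0..t. L1norm (\<lambda>x. psi \<alpha> \<beta> \<tau> x * h x))
           \<le> (1 + \<beta> / 2) / (1 - \<beta> / \<alpha>) * L1norm (\<lambda>x. psi \<alpha> \<beta> t x * h x)"
proof -
  define g where "g = \<beta> / \<alpha>"
  define L where "L = L1norm (\<lambda>x. psi \<alpha> \<beta> t x * h x)"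
  have "0 < \<alpha>" "0 \<le> g" "g < 1"
    using assms by (simp_all add: g_def)
  have "0 \<le> L"
    by (simp add: L_def L1norm_def)
  have "(LBINT \<tau>=0..t. L1norm (\<lambda>x. psi \<alpha> \<beta> \<tau> x * h x))
          \<le> ((1 + \<beta> / 2) * t powr g * L) * (t powr (-g + 1) / (-g + 1))"
  proof (rule interval_integral_le_powr_bound)
    fix \<tau> assume "0 < \<tau>" "\<tau> < t"
    moreover have "(t / \<tau>) powr g = t powr g * \<tau> powr (-g)"
      using \<open>0 < \<tau>\<close> t by (simp add: powr_divide powr_minus_divide)
    ultimately show "L1norm (\<lambda>x. psi \<alpha> \<beta> \<tau> x * h x) \<le> (1 + \<beta> / 2) * t powr g * L * \<tau> powr (-g)"
      using L1norm_psi_mult_le[OF \<open>0 < \<alpha>\<close> \<open>0 \<le> \<beta>\<close> \<open>0 < \<tau>\<close> _ h, of t]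
      by (simp add: L_def g_def mult_ac)
  qed (use assms \<open>g < 1\<close> \<open>0 \<le> L\<close> in auto)
  also have "\<dots> = t * ((1 + \<beta> / 2) / (1 - g) * L)"
    using t \<open>g < 1\<close> by (simp add: field_simps flip: powr_add)
  finally show ?thesis
    using t by (simp add: L_def g_def field_simps)
qed

theorem lemma4:
  fixes \<alpha> \<beta> \<kappa> :: real
  assumes "CARD('d::finite) \<ge> 3"
    and "1 < \<alpha>" and "\<alpha> < 2" and "\<kappa> > 0"
    and "0 < \<beta>" and "\<beta> < \<alpha>"
    and "\<beta> * ((real CARD('d) + \<beta> - 2) / (real CARD('d) + \<beta> - \<alpha>))
           * (gamma_const CARD('d) (real CARD('d) + \<beta> - 2)
              / gamma_const CARD('d) (real CARD('d) + \<beta> - \<alpha>)) = \<kappa>"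
  shows "\<exists>C::real. \<forall>(h :: real^'d \<Rightarrow> real) t.
           integrable lborel h \<longrightarrow> (\<forall>x. 0 \<le> h x) \<longrightarrow> 0 < t \<longrightarrow>
           (1 / t) * (LBINT \<tau>=0..t. L1norm (\<lambda>x. psi \<alpha> \<beta> \<tau> x * h x))
             \<le> C * L1norm (\<lambda>x. psi \<alpha> \<beta> t x * h x)"
  using \<open>0 < \<beta>\<close> \<open>\<beta> < \<alpha>\<close>
  by (intro exI[of _ "(1 + \<beta> / 2) / (1 - \<beta> / \<alpha>)"] allI impI average_L1norm_psi_mult_le) auto

end
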